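(* Let $p$ be a prime and let $G$ be a finite $p$-group. Let $c_p$ be the number of distinct cyclic subgroups of order $p$ of $G$; then $\mathcal{P}^*(G)$ has exactly $c_p$ connected components $H_1,\dots,H_{c_p}$. For each $i$, let $\tilde{H_i}$ denote the subgraph of $\mathcal{P}(G)$ induced on the vertex set $V(H_i)\cup\{1\}$. Then $$\kappa(\mathcal{P}(G))=\kappa(\tilde{H_1})\cdot\kappa(\tilde{H_2})\cdots\kappa(\tilde{H_{c_p}}),$$ where $\kappa(\Gamma)$ denotes the number of spanning trees of a graph $\Gamma$.
   Context: For a finite group $G$, the power graph $\mathcal{P}(G)$ is the simple undirected graph with vertex set $G$, two distinct vertices $x,y$ being adjacent iff $\langle x\rangle\subseteq\langle y\rangle$ or $\langle y\rangle\subseteq\langle x\rangle$. $\mathcal{P}^*(G)$ denotes the graph obtained from $\mathcal{P}(G)$ by deleting the vertex $1$. *)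

theory Defs
  imports "HOL-Algebra.Algebra"
begin

text \<open>Simple graphs are given by a vertex set V and an adjacency relation E;
  the graph considered is always the one induced on V, i.e. only pairs of
  vertices of V matter.\<close>

definition reach :: "'a set \<Rightarrow> ('a \<Rightarrow> 'a \<Rightarrow> bool) \<Rightarrow> 'a \<Rightarrow> 'a \<Rightarrow> bool" where
  "reach V E = (\<lambda>x y. x \<in> V \<and> y \<in> V \<and> E x y)\<^sup>*\<^sup>*"

definition connected_graph :: "'a set \<Rightarrow> ('a \<Rightarrow> 'a \<Rightarrow> bool) \<Rightarrow> bool" where
  "connected_graph V E \<longleftrightarrow> V \<noteq> {} \<and> (\<forall>x\<in>V. \<forall>y\<in>V. reach V E x y)"

definition components :: "'a set \<Rightarrow> ('a \<Rightarrow> 'a \<Rightarrow> bool) \<Rightarrow> 'a set set" where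
  "components V E = {{y \<in> V. reach V E x y} | x. x \<in> V}"

definition edges :: "'a set \<Rightarrow> ('a \<Rightarrow> 'a \<Rightarrow> bool) \<Rightarrow> 'a set set" where
  "edges V E = {{x, y} | x y. x \<in> V \<and> y \<in> V \<and> x \<noteq> y \<and> E x y}"

definition has_cycle :: "'a set set \<Rightarrow> bool" where
  "has_cycle T \<longleftrightarrow> (\<exists>vs. length vs \<ge> 3 \<and> distinct vs \<and>
      (\<forall>i < length vs. {vs ! i, vs ! ((i + 1) mod length vs)} \<in> T))"

definition spanning_tree :: "'a set \<Rightarrow> ('a \<Rightarrow> 'a \<Rightarrow> bool) \<Rightarrow> 'a set set \<Rightarrow> bool" where
  "spanning_tree V E T \<longleftrightarrow> T \<subseteq> edges V E \<and>
      connected_graph V (\<lambda>x y. {x, y} \<in> T) \<and> \<not> has_cycle T"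

definition num_spanning_trees :: "'a set \<Rightarrow> ('a \<Rightarrow> 'a \<Rightarrow> bool) \<Rightarrow> nat" where
  "num_spanning_trees V E = card {T. spanning_tree V E T}"

definition power_adj :: "('a, 'b) monoid_scheme \<Rightarrow> 'a \<Rightarrow> 'a \<Rightarrow> bool" where
  "power_adj G x y \<longleftrightarrow> x \<noteq> y \<and>
      (generate G {x} \<subseteq> generate G {y} \<or> generate G {y} \<subseteq> generate G {x})"

definition num_cyclic_subgroups_of_order :: "('a, 'b) monoid_scheme \<Rightarrow> nat \<Rightarrow> nat" where
  "num_cyclic_subgroups_of_order G p =
     card {H. (\<exists>x \<in> carrier G. H = generate G {x}) \<and> card H = p}"

end

(*
  In a finite p-group every element x other than 1 generates a cyclic p-group, and this
  cyclic group has exactly one subgroup of order p, generated by x^(ord x div p).  If the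
  cyclic group of x is contained in that of y, both have the same subgroup of order p, so
  this subgroup is constant along paths of P*(G).  Conversely x and every y with the same
  subgroup are joined through its generator.  Hence the components of P*(G) correspond to
  the subgroups of order p.

  No edge of P(G) joins two different components H_i, so every edge lies in exactly one of
  the graphs on H_i and 1.  An edge set is then a spanning tree of P(G) iff each of its
  restrictions to these graphs is one: a path that leaves H_i and 1 can only come back
  through 1, and a cycle passes through 1 at most once, so it stays inside a single H_i
  together with 1.  Restriction is therefore a bijection from the spanning trees of P(G) to
  the tuples of spanning trees of the graphs on H_i and 1.
*)

theory Submission
  imports Defs "HOL-Algebra.Multiplicative_Group" "HOL-Computational_Algebra.Primes"
begin

section \<open>Walks, edges and cycles\<close>

lemma reach_refl: "reach V E x x"
  by (simp add: reach_def)

lemma reach_trans: "reach V E x y \<Longrightarrow> reach V E y z \<Longrightarrow> reach V E x z"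
  unfolding reach_def by (rule rtranclp_trans)

lemma reach_step: "x \<in> V \<Longrightarrow> y \<in> V \<Longrightarrow> E x y \<Longrightarrow> reach V E x y"
  unfolding reach_def by (rule r_into_rtranclp) simp

lemma reach_sym: "symp E \<Longrightarrow> reach V E x y \<Longrightarrow> reach V E y x"
  unfolding reach_def by (metis (no_types, lifting) sympD sympI symp_rtranclp)

lemma reach_mono:
  assumes "reach V E x y" and "V \<subseteq> V'" and "\<And>a b. a \<in> V \<Longrightarrow> b \<in> V \<Longrightarrow> E a b \<Longrightarrow> E' a b"
  shows "reach V' E' x y"
  using assms(1) unfolding reach_def
  by (induction rule: rtranclp_induct) (use assms(2,3) in \<open>auto intro: rtranclp.rtrancl_into_rtrancl\<close>)

lemma reach_restrict_cut_vertex: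
  assumes "reach V R x z" and "symp R" and "x \<in> A"
    and "\<And>a b. a \<in> A \<Longrightarrow> b \<in> V - A \<Longrightarrow> R a b \<Longrightarrow> a = v"
  shows "reach A R x (if z \<in> A then z else v)"
  using assms(1) unfolding reach_def[of V]
proof (induction rule: rtranclp_induct)
  case base
  then show ?case using assms(3) by (simp add: reach_refl)
next
  case (step y z)
  then have "R y z" "R z y" "y \<in> V" "z \<in> V"
    using assms(2) by (auto dest: sympD)
  show ?case
  proof (cases "y \<in> A")
    case True
    then show ?thesis
      using step.IH assms(4)[of y z] reach_trans[OF _ reach_step[of y A z R]] \<open>R y z\<close> \<open>z \<in> V\<close>
      by auto
  next
    case False
    then show ?thesis
      using step.IH assms(4)[of z y] \<open>R z y\<close> \<open>y \<in> V\<close> by auto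
  qed
qed

lemma mem_edges_iff:
  "{a, b} \<in> edges V E \<longleftrightarrow> a \<in> V \<and> b \<in> V \<and> a \<noteq> b \<and> (E a b \<or> E b a)"
  unfolding edges_def by (auto simp: doubleton_eq_iff)

lemma edges_subset_eq: "A \<subseteq> V \<Longrightarrow> edges A E = {e \<in> edges V E. e \<subseteq> A}"
  unfolding edges_def by blast

lemma has_cycle_mono: "has_cycle T \<Longrightarrow> T \<subseteq> T' \<Longrightarrow> has_cycle T'"
  unfolding has_cycle_def by blast

definition is_cycle :: "'a set set \<Rightarrow> 'a list \<Rightarrow> bool" where
  "is_cycle T vs \<longleftrightarrow> length vs \<ge> 3 \<and> distinct vs \<and>
     (\<forall>i < length vs. {vs ! i, vs ! ((i + 1) mod length vs)} \<in> T)"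

lemma has_cycle_iff: "has_cycle T \<longleftrightarrow> (\<exists>vs. is_cycle T vs)"
  unfolding has_cycle_def is_cycle_def ..

lemma is_cycle_rotate:
  assumes "is_cycle T vs"
  shows "is_cycle T (rotate m vs)"
proof -
  let ?n = "length vs"
  have "{rotate m vs ! i, rotate m vs ! ((i + 1) mod ?n)} \<in> T" if "i < ?n" for i
  proof -
    have "(m + (i + 1) mod ?n) mod ?n = ((m + i) mod ?n + 1) mod ?n"
      by (metis add.assoc mod_add_left_eq mod_add_right_eq)
    moreover have "0 < ?n"
      using that by linarith
    then have "(i + 1) mod ?n < ?n" "(m + i) mod ?n < ?n"
      by simp_all
    ultimately show ?thesis
      using assms that unfolding is_cycle_def by (simp add: nth_rotate)
  qed
  then show ?thesis
    using assms unfolding is_cycle_def by simp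
qed

lemma is_cycle_rotate_to_end:
  assumes "is_cycle T vs"
  obtains ws where "is_cycle T ws" and "\<And>i. i < length ws - 1 \<Longrightarrow> ws ! i \<noteq> v"
proof (cases "v \<in> set vs")
  case False
  then show ?thesis
    using that[OF assms] by (metis diff_le_self less_le_trans nth_mem)
next
  case True
  then obtain k where k: "k < length vs" "vs ! k = v"
    by (meson in_set_conv_nth)
  define ws where "ws = rotate (Suc k) vs"
  have ws: "is_cycle T ws" "length ws = length vs"
    unfolding ws_def using is_cycle_rotate[OF assms, of "Suc k"] by (simp_all del: rotate_Suc)
  have "Suc k + (length vs - 1) = k + length vs"
    using k(1) by simp
  then have "ws ! (length vs - 1) = v"
    unfolding ws_def using k nth_rotate[of "length vs - 1" vs "Suc k"] by simp
  moreover have "ws ! i \<noteq> ws ! (length vs - 1)" if "i < length ws - 1" for i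
    using ws that unfolding is_cycle_def by (simp add: nth_eq_iff_index_eq)
  ultimately show ?thesis
    using that[OF ws(1)] ws(2) by metis
qed

section \<open>Connected components\<close>

lemma components_eq_image: "components W E = (\<lambda>x. {y \<in> W. reach W E x y}) ` W"
  unfolding components_def by blast

lemma components_cover: "\<Union>(components W E) = W"
  unfolding components_eq_image by (auto intro: reach_refl)

lemma finite_components: "finite W \<Longrightarrow> finite (components W E)"
  unfolding components_eq_image by simp

lemma component_eq:
  assumes "symp E" and "z \<in> {y \<in> W. reach W E x y}"
  shows "{y \<in> W. reach W E x y} = {y \<in> W. reach W E z y}"
proof -
  have "reach W E x z" "reach W E z x"
    using assms reach_sym by auto
  then show ?thesis
    using reach_trans[of W E x z] reach_trans[of W E z x] by blast
qed

lemma components_disjoint: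
  assumes "symp E" and "C \<in> components W E" and "C' \<in> components W E" and "C \<noteq> C'"
  shows "C \<inter> C' = {}"
proof (rule ccontr)
  assume "C \<inter> C' \<noteq> {}"
  then obtain z where z: "z \<in> C" "z \<in> C'"
    by blast
  obtain x x' where "C = {y \<in> W. reach W E x y}" "C' = {y \<in> W. reach W E x' y}"
    using assms(2,3) unfolding components_eq_image by blast
  then have "C = {y \<in> W. reach W E z y}" "C' = {y \<in> W. reach W E z y}"
    using component_eq[OF assms(1)] z by simp_all
  then show False
    using assms(4) by simp
qed

lemma no_edge_between_components:
  assumes "symp E" and "C \<in> components W E" and "C' \<in> components W E" and "C \<noteq> C'"
    and "a \<in> C" and "b \<in> C'"
  shows "\<not> E a b"
proof
  assume "E a b"
  obtain x where C: "C = {y \<in> W. reach W E x y}"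
    using assms(2) unfolding components_eq_image by blast
  have "b \<in> W"
    using assms(3,6) components_cover[of W E] by blast
  have "a \<in> W" "reach W E x a"
    using assms(5) C by auto
  then have "b \<in> C"
    using C reach_trans[of W E x a b] reach_step[of a W b E] \<open>E a b\<close> \<open>b \<in> W\<close> by simp
  then show False
    using components_disjoint[OF assms(1-4)] assms(6) by blast
qed

lemma card_components_eq_card_image:
  assumes "\<And>x y. x \<in> W \<Longrightarrow> y \<in> W \<Longrightarrow> reach W E x y \<longleftrightarrow> f x = f y"
  shows "card (components W E) = card (f ` W)"
proof -
  let ?fibre = "\<lambda>H. {y \<in> W. f y = H}"
  have "{y \<in> W. reach W E x y} = ?fibre (f x)" if "x \<in> W" for x
    using assms that by auto
  then have "components W E = ?fibre ` f ` W"
    unfolding components_eq_image image_image by simp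
  moreover have "inj_on ?fibre (f ` W)"
    by (rule inj_onI) blast
  ultimately show ?thesis
    by (simp add: card_image)
qed

section \<open>Spanning trees of a wedge of graphs\<close>

text \<open>\<open>V\<close> is the one-point union at \<open>v\<close> of the graphs on the blocks \<open>C \<union> {v}\<close>; for the
  power graph, \<open>v = \<one>\<close> and these are the graphs \<open>H\<^sub>i \<union> {1}\<close> of the statement.\<close>

locale wedge_decomposition =
  fixes V :: "'a set" and v :: 'a and CC :: "'a set set" and E :: "'a \<Rightarrow> 'a \<Rightarrow> bool"
  assumes v_in: "v \<in> V"
    and blocks_cover: "\<Union>CC = V - {v}"
    and blocks_disjoint: "\<And>C C'. C \<in> CC \<Longrightarrow> C' \<in> CC \<Longrightarrow> C \<noteq> C' \<Longrightarrow> C \<inter> C' = {}"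
    and no_edge_between_blocks:
      "\<And>C C' a b. C \<in> CC \<Longrightarrow> C' \<in> CC \<Longrightarrow> C \<noteq> C' \<Longrightarrow> a \<in> C \<Longrightarrow> b \<in> C' \<Longrightarrow> \<not> E a b"
begin

lemma block_unique: "C \<in> CC \<Longrightarrow> C' \<in> CC \<Longrightarrow> x \<in> C \<Longrightarrow> x \<in> C' \<Longrightarrow> C = C'"
  using blocks_disjoint by blast

lemma block_subset: "C \<in> CC \<Longrightarrow> C \<union> {v} \<subseteq> V"
  using blocks_cover v_in by blast

lemma block_edges_disjoint:
  assumes "C \<in> CC" "C' \<in> CC" "e \<in> edges (C \<union> {v}) E" "e \<in> edges (C' \<union> {v}) E"
  shows "C = C'"
proof -
  obtain a b where e: "e = {a, b}" "a \<noteq> b"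
    using assms(3) unfolding edges_def by blast
  then have "a \<in> C \<union> {v}" "b \<in> C \<union> {v}" "a \<in> C' \<union> {v}" "b \<in> C' \<union> {v}"
    using assms(3,4) by (simp_all add: mem_edges_iff)
  then show ?thesis
    using e(2) block_unique[OF assms(1,2)] by blast
qed

lemma edges_eq_Union_blocks: "edges V E = (\<Union>C\<in>CC. edges (C \<union> {v}) E)"
proof
  show "edges V E \<subseteq> (\<Union>C\<in>CC. edges (C \<union> {v}) E)"
  proof
    fix e assume "e \<in> edges V E"
    then obtain a b where e: "e = {a, b}" "a \<in> V" "b \<in> V" "a \<noteq> b" "E a b"
      unfolding edges_def by blast
    have "\<exists>C\<in>CC. a \<in> C \<union> {v} \<and> b \<in> C \<union> {v}"
    proof (cases "a = v \<or> b = v")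
      case True
      then show ?thesis
        using e(2-4) blocks_cover by auto
    next
      case False
      then obtain C C' where "C \<in> CC" "a \<in> C" "C' \<in> CC" "b \<in> C'"
        using e(2,3) blocks_cover by blast
      then show ?thesis
        using no_edge_between_blocks e(5) by blast
    qed
    then obtain C where "C \<in> CC" "a \<in> C \<union> {v}" "b \<in> C \<union> {v}"
      by blast
    then have "e \<in> edges (C \<union> {v}) E"
      using e by (simp add: mem_edges_iff)
    then show "e \<in> (\<Union>C\<in>CC. edges (C \<union> {v}) E)"
      using \<open>C \<in> CC\<close> by blast
  qed
  show "(\<Union>C\<in>CC. edges (C \<union> {v}) E) \<subseteq> edges V E"
    using edges_subset_eq[OF block_subset] by auto
qed

lemma edge_leaving_block:
  assumes "C \<in> CC" "{a, b} \<in> edges V E" "a \<in> C \<union> {v}" "b \<notin> C \<union> {v}"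
  shows "a = v"
proof -
  obtain C' where "C' \<in> CC" "{a, b} \<in> edges (C' \<union> {v}) E"
    using assms(2) edges_eq_Union_blocks by blast
  then have "a \<in> C' \<union> {v}" "b \<in> C' \<union> {v}"
    by (simp_all add: mem_edges_iff)
  then show ?thesis
    using assms(1,3,4) block_unique[OF assms(1) \<open>C' \<in> CC\<close>] by blast
qed

lemma spanning_tree_restrict_block:
  assumes T: "spanning_tree V E T" and C: "C \<in> CC"
  shows "spanning_tree (C \<union> {v}) E (T \<inter> edges (C \<union> {v}) E)"
proof -
  let ?A = "C \<union> {v}"
  have T_edges: "T \<subseteq> edges V E" and T_conn: "connected_graph V (\<lambda>a b. {a, b} \<in> T)"
    and T_acyclic: "\<not> has_cycle T"
    using T unfolding spanning_tree_def by auto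
  have sym: "symp (\<lambda>a b. {a, b} \<in> T)"
    by (simp add: symp_def insert_commute)
  have leaving: "a = v" if "a \<in> ?A" "b \<in> V - ?A" "{a, b} \<in> T" for a b
    using edge_leaving_block[OF C] T_edges that by blast
  have "reach ?A (\<lambda>a b. {a, b} \<in> T \<inter> edges ?A E) x y" if "x \<in> ?A" "y \<in> ?A" for x y
  proof -
    have "reach V (\<lambda>a b. {a, b} \<in> T) x y"
      using T_conn that block_subset[OF C] unfolding connected_graph_def by blast
    from reach_restrict_cut_vertex[OF this sym \<open>x \<in> ?A\<close> leaving]
    have "reach ?A (\<lambda>a b. {a, b} \<in> T) x y"
      using \<open>y \<in> ?A\<close> by simp
    then show ?thesis
    proof (rule reach_mono)
      fix a b assume "a \<in> ?A" "b \<in> ?A" "{a, b} \<in> T"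
      then show "{a, b} \<in> T \<inter> edges ?A E"
        using T_edges edges_subset_eq[OF block_subset[OF C]] by auto
    qed simp
  qed
  moreover have "\<not> has_cycle (T \<inter> edges ?A E)"
    using T_acyclic has_cycle_mono by blast
  ultimately show ?thesis
    unfolding spanning_tree_def connected_graph_def by blast
qed

lemma cycle_vertices_in_one_block:
  assumes g: "\<And>C. C \<in> CC \<Longrightarrow> g C \<subseteq> edges (C \<union> {v}) E"
    and cyc: "is_cycle (\<Union>C\<in>CC. g C) ws"
    and avoid: "\<And>i. i < length ws - 1 \<Longrightarrow> ws ! i \<noteq> v"
  obtains C0 where "C0 \<in> CC" and "\<And>i. i < length ws \<Longrightarrow> ws ! i \<in> C0 \<union> {v}"
proof -
  let ?n = "length ws"
  have n: "?n \<ge> 3"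
    and edge: "\<And>i. i < ?n \<Longrightarrow> \<exists>C\<in>CC. {ws ! i, ws ! ((i + 1) mod ?n)} \<in> g C"
    using cyc unfolding is_cycle_def by auto
  have ends_in_block: "a \<in> C \<union> {v}" "b \<in> C \<union> {v}" if "C \<in> CC" "{a, b} \<in> g C" for C a b
    using g[OF that(1)] that(2) by (auto simp: mem_edges_iff)
  have "0 < ?n" "(0 + 1) mod ?n = 1"
    using n by auto
  then obtain C0 where C0: "C0 \<in> CC" "{ws ! 0, ws ! 1} \<in> g C0"
    using edge[of 0] by auto
  have "ws ! 0 \<noteq> v"
    using avoid[of 0] n by simp
  then have "ws ! 0 \<in> C0"
    using ends_in_block(1)[OF C0] by blast
  \<comment> \<open>Only the last vertex may be \<open>v\<close>, so the walk along the cycle cannot leave the block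
    of its first vertex.\<close>
  have "ws ! i \<in> C0 \<union> {v}" if "i < ?n" for i
    using that
  proof (induction i)
    case 0
    then show ?case using \<open>ws ! 0 \<in> C0\<close> by simp
  next
    case (Suc i)
    then have "ws ! i \<noteq> v" "ws ! i \<in> C0 \<union> {v}"
      using avoid by simp_all
    moreover obtain C where "C \<in> CC" "{ws ! i, ws ! Suc i} \<in> g C"
      using edge[of i] Suc.prems by auto
    ultimately show ?case
      using ends_in_block block_unique[OF \<open>C \<in> CC\<close> C0(1)] by blast
  qed
  then show ?thesis
    using that C0(1) by blast
qed

lemma cycle_in_single_block:
  assumes g: "\<And>C. C \<in> CC \<Longrightarrow> g C \<subseteq> edges (C \<union> {v}) E"
    and cyc: "is_cycle (\<Union>C\<in>CC. g C) ws"
    and avoid: "\<And>i. i < length ws - 1 \<Longrightarrow> ws ! i \<noteq> v"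
  shows "\<exists>C\<in>CC. is_cycle (g C) ws"
proof -
  let ?n = "length ws"
  obtain C0 where C0: "C0 \<in> CC" and in_C0: "\<And>i. i < ?n \<Longrightarrow> ws ! i \<in> C0 \<union> {v}"
    using cycle_vertices_in_one_block[OF g cyc avoid] by blast
  have "{ws ! i, ws ! ((i + 1) mod ?n)} \<in> g C0" if i: "i < ?n" for i
  proof -
    let ?e = "{ws ! i, ws ! ((i + 1) mod ?n)}"
    obtain C where C: "C \<in> CC" "?e \<in> g C"
      using cyc i unfolding is_cycle_def by blast
    then have e_C: "?e \<in> edges (C \<union> {v}) E"
      using g by blast
    have "0 < ?n"
      using i by linarith
    then have "?e \<subseteq> C0 \<union> {v}"
      using in_C0 i by simp
    moreover have "?e \<in> edges V E"
      using e_C edges_subset_eq[OF block_subset[OF C(1)]] by blast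
    ultimately have "?e \<in> edges (C0 \<union> {v}) E"
      using edges_subset_eq[OF block_subset[OF C0(1)]] by blast
    then show ?thesis
      using C block_edges_disjoint[OF C(1) C0(1) e_C] by simp
  qed
  then show ?thesis
    using C0 cyc unfolding is_cycle_def by auto
qed

lemma spanning_tree_Union_blocks:
  assumes g: "\<And>C. C \<in> CC \<Longrightarrow> spanning_tree (C \<union> {v}) E (g C)"
  shows "spanning_tree V E (\<Union>C\<in>CC. g C)"
proof -
  let ?U = "\<Union>C\<in>CC. g C"
  have g_edges: "g C \<subseteq> edges (C \<union> {v}) E" if "C \<in> CC" for C
    using g[OF that] unfolding spanning_tree_def by blast
  have "reach V (\<lambda>a b. {a, b} \<in> ?U) x v" if x: "x \<in> V" for x
  proof (cases "x = v")
    case True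
    then show ?thesis by (simp add: reach_refl)
  next
    case False
    then obtain C where C: "C \<in> CC" "x \<in> C"
      using x blocks_cover by blast
    then have "reach (C \<union> {v}) (\<lambda>a b. {a, b} \<in> g C) x v"
      using g[OF C(1)] unfolding spanning_tree_def connected_graph_def by blast
    then show ?thesis
      by (rule reach_mono) (use C block_subset[OF C(1)] in auto)
  qed
  moreover have "symp (\<lambda>a b. {a, b} \<in> ?U)"
    by (simp add: symp_def insert_commute)
  ultimately have "reach V (\<lambda>a b. {a, b} \<in> ?U) x y" if "x \<in> V" "y \<in> V" for x y
    using that reach_trans[OF _ reach_sym, of V _ x v y] by blast
  then have "connected_graph V (\<lambda>a b. {a, b} \<in> ?U)"
    unfolding connected_graph_def using v_in by blast
  moreover have "\<not> has_cycle ?U"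
  proof
    assume "has_cycle ?U"
    then obtain vs where "is_cycle ?U vs"
      unfolding has_cycle_iff by blast
    then obtain ws where "is_cycle ?U ws" "\<And>i. i < length ws - 1 \<Longrightarrow> ws ! i \<noteq> v"
      using is_cycle_rotate_to_end[where v = v] by blast
    then obtain C where "C \<in> CC" "is_cycle (g C) ws"
      using cycle_in_single_block[OF g_edges] by blast
    then have "has_cycle (g C)"
      unfolding has_cycle_iff by blast
    then show False
      using g[OF \<open>C \<in> CC\<close>] unfolding spanning_tree_def by blast
  qed
  moreover have "?U \<subseteq> edges V E"
    using g_edges edges_eq_Union_blocks by blast
  ultimately show ?thesis
    unfolding spanning_tree_def by blast
qed

lemma spanning_trees_bij_blocks:
  "bij_betw (\<lambda>T. \<lambda>C\<in>CC. T \<inter> edges (C \<union> {v}) E) {T. spanning_tree V E T}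
     (\<Pi>\<^sub>E C\<in>CC. {T. spanning_tree (C \<union> {v}) E T})"
proof (rule bij_betw_byWitness[where f' = "\<lambda>h. \<Union>C\<in>CC. h C"]; intro ballI subsetI)
  fix T assume "T \<in> {T. spanning_tree V E T}"
  then have "T \<subseteq> edges V E"
    unfolding spanning_tree_def by blast
  have "(\<Union>C\<in>CC. (\<lambda>C\<in>CC. T \<inter> edges (C \<union> {v}) E) C) = T \<inter> (\<Union>C\<in>CC. edges (C \<union> {v}) E)"
    by auto
  also have "\<dots> = T"
    using \<open>T \<subseteq> edges V E\<close> edges_eq_Union_blocks by blast
  finally show "(\<Union>C\<in>CC. (\<lambda>C\<in>CC. T \<inter> edges (C \<union> {v}) E) C) = T" .
next
  fix h assume h: "h \<in> (\<Pi>\<^sub>E C\<in>CC. {T. spanning_tree (C \<union> {v}) E T})"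
  then have h_edges: "h C \<subseteq> edges (C \<union> {v}) E" if "C \<in> CC" for C
    using that unfolding spanning_tree_def by auto
  have "(\<Union>C'\<in>CC. h C') \<inter> edges (C \<union> {v}) E = h C" if C: "C \<in> CC" for C
  proof
    show "h C \<subseteq> (\<Union>C'\<in>CC. h C') \<inter> edges (C \<union> {v}) E"
      using C h_edges[OF C] by blast
    show "(\<Union>C'\<in>CC. h C') \<inter> edges (C \<union> {v}) E \<subseteq> h C"
    proof
      fix e assume "e \<in> (\<Union>C'\<in>CC. h C') \<inter> edges (C \<union> {v}) E"
      then obtain C' where "C' \<in> CC" "e \<in> h C'" "e \<in> edges (C \<union> {v}) E"
        by blast
      moreover have "C' = C"
        using block_edges_disjoint[OF \<open>C' \<in> CC\<close> C] h_edges calculation by blast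
      ultimately show "e \<in> h C"
        by simp
    qed
  qed
  then have "(\<lambda>C\<in>CC. (\<Union>C'\<in>CC. h C') \<inter> edges (C \<union> {v}) E) = (\<lambda>C\<in>CC. h C)"
    by (rule restrict_ext)
  then show "(\<lambda>C\<in>CC. (\<Union>C'\<in>CC. h C') \<inter> edges (C \<union> {v}) E) = h"
    using PiE_restrict[OF h] by simp
next
  fix h assume "h \<in> (\<lambda>T. \<lambda>C\<in>CC. T \<inter> edges (C \<union> {v}) E) ` {T. spanning_tree V E T}"
  then show "h \<in> (\<Pi>\<^sub>E C\<in>CC. {T. spanning_tree (C \<union> {v}) E T})"
    using spanning_tree_restrict_block by auto
next
  fix T assume "T \<in> (\<lambda>h. \<Union>C\<in>CC. h C) ` (\<Pi>\<^sub>E C\<in>CC. {T. spanning_tree (C \<union> {v}) E T})"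
  then show "T \<in> {T. spanning_tree V E T}"
    using spanning_tree_Union_blocks by auto
qed

lemma num_spanning_trees_eq_prod_blocks:
  "finite CC \<Longrightarrow> num_spanning_trees V E = (\<Prod>C\<in>CC. num_spanning_trees (C \<union> {v}) E)"
  unfolding num_spanning_trees_def
  using bij_betw_same_card[OF spanning_trees_bij_blocks] by (simp add: card_PiE)

end

lemma num_spanning_trees_split_at_vertex:
  assumes "symp E" and "finite V" and "v \<in> V"
  shows "num_spanning_trees V E = (\<Prod>C\<in>components (V - {v}) E. num_spanning_trees (C \<union> {v}) E)"
proof -
  interpret wedge_decomposition V v "components (V - {v}) E" E
    using assms components_cover components_disjoint no_edge_between_components
    by unfold_locales simp_all
  show ?thesis
    using assms(2) by (simp add: num_spanning_trees_eq_prod_blocks finite_components)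
qed

section \<open>Cyclic subgroups and the power graph of a p-group\<close>

context group
begin

lemma generate_singleton_subset:
  "b \<in> carrier G \<Longrightarrow> a \<in> generate G {b} \<Longrightarrow> generate G {a} \<subseteq> generate G {b}"
  by (simp add: generate_is_subgroup generate_subgroup_incl)

lemma ord_pow_ord_div:
  assumes "finite (carrier G)" "x \<in> carrier G" "d dvd ord x"
  shows "ord (x [^] (ord x div d)) = d"
proof -
  have "ord x \<ge> 1"
    using ord_ge_1 assms(1,2) .
  with assms(3) obtain k where k: "ord x = d * k" "k \<noteq> 0" "d \<noteq> 0"
    by (auto elim!: dvdE)
  then have "ord x div d = k"
    by simp
  then show ?thesis
    using ord_pow[OF assms(2), of k] k by simp
qed

lemma generate_eq_in_cyclic:
  assumes fin: "finite (carrier G)" and x: "x \<in> carrier G" and y: "y \<in> generate G {x}"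
  shows "generate G {y} = generate G {x [^] (ord x div ord y)}"
proof -
  let ?k = "ord x div ord y"
  obtain i :: nat where i: "y = x [^] i"
    using y generate_pow_on_finite_carrier[OF fin x] by blast
  have "y [^] ord x = x [^] (i * ord x)"
    using x by (simp add: i nat_pow_pow)
  then have "y [^] ord x = \<one>"
    using pow_eq_id[OF x] by simp
  then have dvd: "ord y dvd ord x"
    using x i pow_eq_id by simp
  have "x [^] (i * ord y) = \<one>"
    using x by (simp add: i nat_pow_pow flip: nat_pow_pow)
  then have "?k * ord y dvd i * ord y"
    using x dvd pow_eq_id by simp
  then have "?k dvd i"
    using ord_ge_1[OF fin, of y] x i by simp
  then obtain j where "i = ?k * j"
    by blast
  then have "y = (x [^] ?k) [^] j"
    using x i by (simp add: nat_pow_pow)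
  then have "y \<in> generate G {x [^] ?k}"
    using generate_pow_on_finite_carrier[OF fin] x by auto
  then have "generate G {y} \<subseteq> generate G {x [^] ?k}"
    using generate_singleton_subset x by simp
  moreover have "card (generate G {y}) = card (generate G {x [^] ?k})"
    using ord_pow_ord_div[OF fin x dvd] x i by (simp flip: generate_pow_card)
  moreover have "finite (generate G {x [^] ?k})"
    using fin x generate_incl finite_subset by (meson empty_subsetI insert_subset nat_pow_closed)
  ultimately show ?thesis
    by (simp add: card_subset_eq)
qed

end

lemma symp_power_adj: "symp (power_adj G)"
  unfolding power_adj_def by (auto intro: sympI)

lemma reach_power_adj_if_generate_subset:
  assumes "a \<in> W" "b \<in> W" "generate G {a} \<subseteq> generate G {b}"
  shows "reach W (power_adj G) a b"
proof (cases "a = b")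
  case False
  then show ?thesis
    using assms reach_step[of a W b "power_adj G"] unfolding power_adj_def by blast
qed (simp add: reach_refl)

locale p_group = group +
  fixes p :: nat
  assumes prime_p: "Factorial_Ring.prime p"
    and finite_carrier: "finite (carrier G)"
    and order_prime_power: "\<exists>n. order G = p ^ n"
begin

lemma prime_dvd_ord:
  assumes "x \<in> carrier G" "x \<noteq> \<one>"
  shows "p dvd ord x"
proof -
  obtain n where "order G = p ^ n"
    using order_prime_power by blast
  then obtain k where k: "ord x = p ^ k"
    using ord_dvd_group_order[OF assms(1)] divides_primepow_nat[OF prime_p] by auto
  moreover have "k \<noteq> 0"
    using k ord_eq_1[OF assms(1)] assms(2) by auto
  ultimately show ?thesis
    by (simp add: dvd_power)
qed

text \<open>For \<open>x \<noteq> \<one>\<close> this is the unique subgroup of order \<open>p\<close> of the cyclic group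
  generated by \<open>x\<close>.\<close>

definition order_p_subgroup :: "'a \<Rightarrow> 'a set" where
  "order_p_subgroup x = generate G {x [^] (ord x div p)}"

lemma ord_order_p_generator:
  "x \<in> carrier G \<Longrightarrow> x \<noteq> \<one> \<Longrightarrow> ord (x [^] (ord x div p)) = p"
  using ord_pow_ord_div[OF finite_carrier] prime_dvd_ord by blast

lemma order_p_generator_in_generate:
  "x \<in> carrier G \<Longrightarrow> x [^] (ord x div p) \<in> generate G {x}"
  using generate_pow_on_finite_carrier[OF finite_carrier] by blast

lemma order_p_subgroup_unique:
  assumes "x \<in> carrier G" "y \<in> generate G {x}" "ord y = p"
  shows "generate G {y} = order_p_subgroup x"
  using generate_eq_in_cyclic[OF finite_carrier assms(1,2)] assms(3)
  unfolding order_p_subgroup_def by simp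

lemma order_p_subgroup_eq_if_generate_subset:
  assumes "x \<in> carrier G - {\<one>}" "y \<in> carrier G" "generate G {x} \<subseteq> generate G {y}"
  shows "order_p_subgroup x = order_p_subgroup y"
proof -
  let ?g = "x [^] (ord x div p)"
  have "?g \<in> generate G {y}"
    using assms(1,3) order_p_generator_in_generate by blast
  moreover have "ord ?g = p"
    using assms(1) ord_order_p_generator by blast
  ultimately have "generate G {?g} = order_p_subgroup y"
    by (rule order_p_subgroup_unique[OF assms(2)])
  then show ?thesis
    unfolding order_p_subgroup_def by simp
qed

lemma order_p_subgroup_eq_if_reach:
  assumes "reach (carrier G - {\<one>}) (power_adj G) x y"
  shows "order_p_subgroup x = order_p_subgroup y"
  using assms unfolding reach_def
proof (induction rule: rtranclp_induct)
  case (step y z)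
  then have "y \<in> carrier G - {\<one>}" "z \<in> carrier G - {\<one>}"
    "generate G {y} \<subseteq> generate G {z} \<or> generate G {z} \<subseteq> generate G {y}"
    unfolding power_adj_def by auto
  then show ?case
    using step.IH order_p_subgroup_eq_if_generate_subset by auto
qed simp

lemma reach_if_order_p_subgroup_eq:
  assumes x: "x \<in> carrier G - {\<one>}" and y: "y \<in> carrier G - {\<one>}"
    and eq: "order_p_subgroup x = order_p_subgroup y"
  shows "reach (carrier G - {\<one>}) (power_adj G) x y"
proof -
  let ?W = "carrier G - {\<one>}" and ?g = "x [^] (ord x div p)"
  have "ord ?g = p"
    using ord_order_p_generator x by blast
  then have g: "?g \<in> ?W"
    using x prime_gt_1_nat[OF prime_p] by auto
  have "generate G {?g} \<subseteq> generate G {x}"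
    using generate_singleton_subset order_p_generator_in_generate x by blast
  then have "reach ?W (power_adj G) x ?g"
    using reach_sym[OF symp_power_adj reach_power_adj_if_generate_subset[OF g x]] by blast
  moreover have "generate G {?g} \<subseteq> generate G {y}"
    using eq y generate_singleton_subset order_p_generator_in_generate
    unfolding order_p_subgroup_def by auto
  then have "reach ?W (power_adj G) ?g y"
    using reach_power_adj_if_generate_subset[OF g y] by blast
  ultimately show ?thesis
    by (rule reach_trans)
qed

lemma order_p_subgroup_image:
  "order_p_subgroup ` (carrier G - {\<one>}) = {H. (\<exists>x \<in> carrier G. H = generate G {x}) \<and> card H = p}"
proof (intro equalityI subsetI)
  fix H assume "H \<in> order_p_subgroup ` (carrier G - {\<one>})"
  then obtain x where "x \<in> carrier G" "x \<noteq> \<one>" "H = order_p_subgroup x"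
    by blast
  then show "H \<in> {H. (\<exists>x \<in> carrier G. H = generate G {x}) \<and> card H = p}"
    using ord_order_p_generator generate_pow_card unfolding order_p_subgroup_def by auto
next
  fix H assume "H \<in> {H. (\<exists>x \<in> carrier G. H = generate G {x}) \<and> card H = p}"
  then obtain x where x: "x \<in> carrier G" "H = generate G {x}" "ord x = p"
    using generate_pow_card by auto
  then have "x \<noteq> \<one>"
    using prime_gt_1_nat[OF prime_p] by auto
  moreover have "H = order_p_subgroup x"
    using order_p_subgroup_unique[OF x(1) _ x(3)] x(1,2) generate.incl[of x "{x}" G] by blast
  ultimately show "H \<in> order_p_subgroup ` (carrier G - {\<one>})"
    using x(1) by blast
qed

lemma card_components_power_graph:
  "card (components (carrier G - {\<one>}) (power_adj G)) = num_cyclic_subgroups_of_order G p"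
proof -
  have "card (components (carrier G - {\<one>}) (power_adj G)) = card (order_p_subgroup ` (carrier G - {\<one>}))"
    by (rule card_components_eq_card_image)
      (use order_p_subgroup_eq_if_reach reach_if_order_p_subgroup_eq in blast)
  then show ?thesis
    unfolding num_cyclic_subgroups_of_order_def order_p_subgroup_image .
qed

end

theorem corollary3p2:
  fixes G :: "('a, 'b) monoid_scheme" and p :: nat
  assumes "Factorial_Ring.prime p" and "group G" and "finite (carrier G)"
    and "\<exists>n. order G = p ^ n"
  shows "card (components (carrier G - {\<one>\<^bsub>G\<^esub>}) (power_adj G))
           = num_cyclic_subgroups_of_order G p
       \<and> num_spanning_trees (carrier G) (power_adj G)
           = (\<Prod>C \<in> components (carrier G - {\<one>\<^bsub>G\<^esub>}) (power_adj G).
                num_spanning_trees (C \<union> {\<one>\<^bsub>G\<^esub>}) (power_adj G))"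
proof -
  interpret p_group G p
    using assms by (simp add: p_group_def p_group_axioms_def)
  show ?thesis
    using card_components_power_graph
      num_spanning_trees_split_at_vertex[OF symp_power_adj finite_carrier one_closed] by blast
qed

end
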